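(* Let $\pi_1,\pi_2,\pi_3$ be Borel probability measures on $\mathbb{R}_+=[0,\infty)$ and let $\mu=\pi_1\times\pi_2\times\pi_3$ on $\mathbb{R}_+^3$. Let $R:\mathbb{R}_+^3\to\mathbb{R}_+^3$ be $$R(r,s,t)=\bigl(t+[r-s]^+,\;t+[s-r]^+,\;r\wedge s\bigr),$$ and suppose that $R\mu=\mu$, where $R\mu$ is the push-forward of $\mu$ under $R$. Let $\tilde U_i=\mathrm{supp}(\pi_i)$, $t_0=\min\tilde U_3$, $U_i=\tilde U_i-t_0$ and $F_i(t)=\pi_i\bigl([t_0+t,\infty)\bigr)$ for $i=1,2,3$. Then exactly one of the following holds: (1) $U_3=\{0\}$; (2) $U_1=U_2=U_3=\mathbb{R}_+$, and there are $\alpha_1,\alpha_2\in(0,\infty)$ such that $F_i(t)=e^{-\alpha_i t}$ for $t\ge 0$ and $i=1,2,3$, where $\alpha_3=\alpha_1+\alpha_2$; (3) there is $c>0$ such that $U_1=U_2=U_3=c\mathbb{Z}_+$, and there are $\lambda_1,\lambda_2\in(0,1)$ such that $F_i(cn)=\lambda_i^n$ for $n\in\mathbb{Z}_+$ and $i=1,2,3$, where $\lambda_3=\lambda_1\lambda_2$.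
   Context: $\mathrm{supp}(\pi)$ denotes the support of $\pi$, i.e. the intersection of all closed sets of full $\pi$-measure. $\mathbb{Z}_+=\{0,1,2,\dots\}$ and $[a]^+=\max(a,0)$. Interpretation (not needed for the statement): $r$ and $s$ are the masses of ascending and descending particles entering a site, $t$ is the mass born there, and $R\mu=\mu$ is the self-duality (time-reversibility) condition for the broken line process. *)

theory Defs
  imports "HOL-Probability.Probability"
begin

definition msupp :: "real measure \<Rightarrow> real set" where
  "msupp M = \<Inter> {C. closed C \<and> emeasure M C = emeasure M (space M)}"

definition Rmap :: "real \<times> real \<times> real \<Rightarrow> real \<times> real \<times> real" where
  "Rmap = (\<lambda>(r, s, t). (t + max (r - s) 0, t + max (s - r) 0, min r s))"

text \<open>A Borel probability measure on [0,infinity), represented on the real line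
  with all mass on [0,infinity).\<close>
definition prob_on_nonneg :: "real measure \<Rightarrow> bool" where
  "prob_on_nonneg M \<longleftrightarrow> prob_space M \<and> sets M = sets borel \<and> emeasure M {..<0} = 0"

end

theory Submission
  imports Defs
begin

text \<open>
  Invariance has two kinds of consequences.
  (i) Supports: \<open>R\<close> maps \<open>S1 \<times> S2 \<times> S3\<close> into itself (\<open>Si = supp \<pi>i\<close>).  Unless \<open>S3\<close> is a
  single point, this forces \<open>S1 = S2 = S3\<close> and makes \<open>S3 - min S3\<close> a closed set closed
  under sums and nonnegative differences, hence \<open>[0,\<infinity>)\<close> or a lattice \<open>c\<int>\<^sub>+\<close>.
  (ii) Tails: \<open>\<pi>\<^sub>3([x,\<infinity>)) = \<pi>\<^sub>1([x,\<infinity>)) \<pi>\<^sub>2([x,\<infinity>))\<close>, and comparing two events related by \<open>R\<close>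
  shows that \<open>\<pi>\<^sub>2([r+d,\<infinity>)) / \<pi>\<^sub>2([r,\<infinity>))\<close> does not depend on \<open>r\<close> for \<open>\<pi>\<^sub>1\<close>-almost every \<open>r\<close>.
  In the lattice case every support point is an atom, so the tails are geometric; in the
  continuous case one-sided continuity of tails extends the law to all points, rules out
  atoms, and Cauchy's equation gives exponential tails.
\<close>

section \<open>Borel probability measures on the half-line and their supports\<close>

lemma prob_on_nonneg_prob_space: "prob_on_nonneg M \<Longrightarrow> prob_space M"
  by (simp add: prob_on_nonneg_def)

lemma prob_on_nonneg_sets: "prob_on_nonneg M \<Longrightarrow> sets M = sets borel"
  by (simp add: prob_on_nonneg_def)

lemma prob_on_nonneg_space: "prob_on_nonneg M \<Longrightarrow> space M = UNIV"
  using sets_eq_imp_space_eq[OF prob_on_nonneg_sets] by simp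

lemma prob_on_nonneg_borel: "prob_on_nonneg M \<Longrightarrow> A \<in> sets borel \<Longrightarrow> A \<in> sets M"
  by (simp add: prob_on_nonneg_sets)

lemma notin_msupp_iff:
  assumes M: "prob_on_nonneg M"
  shows "x \<notin> msupp M \<longleftrightarrow> (\<exists>V. open V \<and> x \<in> V \<and> emeasure M V = 0)"
proof -
  interpret prob_space M using prob_on_nonneg_prob_space[OF M] .
  have compl: "emeasure M (- V) = 1 - emeasure M V" if "V \<in> sets borel" for V
  proof -
    have V: "V \<in> sets M" using that prob_on_nonneg_borel[OF M] by auto
    have "emeasure M (space M - V) = emeasure M (space M) - emeasure M V"
      using V by (intro emeasure_compl) simp_all
    then show ?thesis using emeasure_space_1 by (simp add: prob_on_nonneg_space[OF M] Compl_eq_Diff_UNIV)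
  qed
  show ?thesis
  proof
    assume "x \<notin> msupp M"
    then obtain C where C: "closed C" "emeasure M C = 1" "x \<notin> C"
      unfolding msupp_def using emeasure_space_1 by auto
    have "emeasure M (- C) = 0"
      using compl[of C] C by simp
    then show "\<exists>V. open V \<and> x \<in> V \<and> emeasure M V = 0"
      using C by (intro exI[of _ "- C"]) auto
  next
    assume "\<exists>V. open V \<and> x \<in> V \<and> emeasure M V = 0"
    then obtain V where V: "open V" "x \<in> V" "emeasure M V = 0" by auto
    then have "closed (- V)" "emeasure M (- V) = emeasure M (space M)"
      using compl[of V] emeasure_space_1 by auto
    then show "x \<notin> msupp M" using V(2) unfolding msupp_def by auto
  qed
qed

lemma msupp_open_pos:
  assumes "prob_on_nonneg M" "x \<in> msupp M" "open V" "x \<in> V"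
  shows "emeasure M V > 0"
  using notin_msupp_iff[OF assms(1), of x] assms(2-4) by (auto simp: zero_less_iff_neq_zero)

lemma closed_msupp: "closed (msupp M)"
  unfolding msupp_def by (rule closed_Inter) auto

lemma msupp_nonneg:
  assumes M: "prob_on_nonneg M" shows "msupp M \<subseteq> {0..}"
proof
  fix x assume x: "x \<in> msupp M"
  show "x \<in> {0..}"
  proof (rule ccontr)
    assume "x \<notin> {0..}"
    then have "emeasure M {..<0} > 0" using msupp_open_pos[OF M x, of "{..<0}"] by auto
    with M show False by (simp add: prob_on_nonneg_def)
  qed
qed

text \<open>The complement of the support is null (by Lindeloef, it is a countable union
  of open null sets).\<close>
lemma msupp_compl_null:
  assumes M: "prob_on_nonneg M" shows "emeasure M (- msupp M) = 0"
proof -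
  let ?F = "{V. open V \<and> emeasure M V = 0}"
  have U: "\<Union>?F = - msupp M" using notin_msupp_iff[OF M] by blast
  obtain F' where F': "F' \<subseteq> ?F" "countable F'" "\<Union>F' = \<Union>?F"
    using Lindelof[of ?F] by auto
  have "(\<Union>V\<in>F'. V) \<in> null_sets M"
    using F'(1,2) prob_on_nonneg_borel[OF M] by (intro null_sets_UN') (auto simp: null_sets_def)
  then show ?thesis using F'(3) U by auto
qed

lemma null_outside_msupp:
  assumes M: "prob_on_nonneg M" and A: "A \<in> sets borel" "A \<inter> msupp M = {}"
  shows "emeasure M A = 0"
proof -
  have "emeasure M A \<le> emeasure M (- msupp M)"
    using A prob_on_nonneg_borel[OF M] closed_msupp by (intro emeasure_mono) auto
  then show ?thesis using msupp_compl_null[OF M] by simp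
qed

lemma msupp_nonempty:
  assumes M: "prob_on_nonneg M" shows "msupp M \<noteq> {}"
proof
  interpret prob_space M using prob_on_nonneg_prob_space[OF M] .
  assume "msupp M = {}"
  then have "emeasure M UNIV = 0" using msupp_compl_null[OF M] by simp
  then show False using emeasure_space_1 prob_on_nonneg_space[OF M] by simp
qed

text \<open>The support is closed, nonempty and bounded below, so it has a least element.\<close>
lemma Inf_msupp_in: "prob_on_nonneg M \<Longrightarrow> Inf (msupp M) \<in> msupp M"
  using closed_contains_Inf[OF msupp_nonempty _ closed_msupp] msupp_nonneg
  by (metis atLeast_iff bdd_below_def subset_eq)

lemma Inf_msupp_le: "prob_on_nonneg M \<Longrightarrow> x \<in> msupp M \<Longrightarrow> Inf (msupp M) \<le> x"
  using msupp_nonneg by (intro cInf_lower) (auto simp: bdd_below_def)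

lemma msupp_isolated_atom:
  assumes M: "prob_on_nonneg M" and y: "y \<in> msupp M" and e: "e > 0"
    and iso: "ball y e \<inter> msupp M \<subseteq> {y}"
  shows "measure M {y} > 0"
proof -
  interpret prob_space M using prob_on_nonneg_prob_space[OF M] .
  have cm: "- msupp M \<in> sets M"
    using borel_open[OF open_Compl[OF closed_msupp]] prob_on_nonneg_sets[OF M] by simp
  have "0 < emeasure M (ball y e)" using msupp_open_pos[OF M y] e by auto
  also have "\<dots> \<le> emeasure M ({y} \<union> - msupp M)"
    using iso cm by (intro emeasure_mono) (auto simp: prob_on_nonneg_sets[OF M])
  also have "\<dots> \<le> emeasure M {y} + emeasure M (- msupp M)"
    using cm by (intro emeasure_subadditive) (auto simp: prob_on_nonneg_sets[OF M])
  finally show ?thesis using msupp_compl_null[OF M] by (simp add: emeasure_eq_measure)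
qed

definition tail :: "real measure \<Rightarrow> real \<Rightarrow> real" where
  "tail M x = measure M {x..}"

definition tail_gt :: "real measure \<Rightarrow> real \<Rightarrow> real" where
  "tail_gt M x = measure M {x<..}"

context
  fixes M :: "real measure"
  assumes M: "prob_on_nonneg M"
begin

interpretation prob_space M using prob_on_nonneg_prob_space[OF M] .

lemma tail_measurable: "(\<lambda>s. emeasure M {s + d..}) \<in> borel_measurable borel"
proof -
  have "sets (borel \<Otimes>\<^sub>M M) = sets (borel \<Otimes>\<^sub>M (borel :: real measure))"
    using prob_on_nonneg_sets[OF M] by (intro sets_pair_measure_cong) auto
  also have "\<dots> = sets (borel :: (real \<times> real) measure)" by (simp only: borel_prod)
  finally have Q: "{p::real \<times> real. fst p + d \<le> snd p} \<in> sets (borel \<Otimes>\<^sub>M M)"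
    by (simp only:) (intro borel_closed closed_Collect_le continuous_intros)
  have "\<And>x. Pair x -` {p::real \<times> real. fst p + d \<le> snd p} = {x + d..}" by auto
  then show ?thesis using measurable_emeasure_Pair[OF Q] by simp
qed

lemma tail_split: "tail M x = measure M {x} + tail_gt M x"
proof -
  have "measure M ({x} \<union> {x<..}) = measure M {x} + measure M {x<..}"
    by (rule finite_measure_Union) (auto simp: prob_on_nonneg_sets[OF M])
  moreover have "{x} \<union> {x<..} = {x..}" by auto
  ultimately show ?thesis unfolding tail_def tail_gt_def by simp
qed

lemma tail_compl: "tail M x = 1 - measure M {..<x}"
proof -
  have "{x..} = space M - {..<x}" using prob_on_nonneg_space[OF M] by auto
  then show ?thesis unfolding tail_def using prob_on_nonneg_borel[OF M] by (simp add: prob_compl)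
qed

lemma tail_mono: "x \<le> y \<Longrightarrow> tail M y \<le> tail M x"
  unfolding tail_def by (intro finite_measure_mono) (auto simp: prob_on_nonneg_sets[OF M])

lemma tail_le_tail_gt: "x < y \<Longrightarrow> tail M y \<le> tail_gt M x"
  unfolding tail_def tail_gt_def by (intro finite_measure_mono) (auto simp: prob_on_nonneg_sets[OF M])

lemma tail_pos: "y \<in> msupp M \<Longrightarrow> x < y \<Longrightarrow> tail M x > 0"
proof -
  assume y: "y \<in> msupp M" "x < y"
  have "0 < emeasure M {x<..}" using msupp_open_pos[OF M y(1)] y(2) by auto
  also have "\<dots> \<le> emeasure M {x..}" by (intro emeasure_mono) (auto simp: prob_on_nonneg_sets[OF M])
  finally show ?thesis by (simp add: tail_def emeasure_eq_measure)
qed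

lemma measure_lessThan_pos: "y \<in> msupp M \<Longrightarrow> y < x \<Longrightarrow> measure M {..<x} > 0"
  using msupp_open_pos[OF M, of y "{..<x}"] by (simp add: emeasure_eq_measure)

lemma tail_left_cont:
  assumes e: "\<epsilon> > 0"
  shows "\<exists>\<delta>>0. \<forall>y. x - \<delta> < y \<longrightarrow> tail M y \<le> tail M x + \<epsilon>"
proof -
  define A where "A n = {x - 1 / (real n + 1)..}" for n :: nat
  have dec: "decseq A" unfolding A_def decseq_def by (auto simp: frac_le)
  have rng: "range A \<subseteq> sets M" using prob_on_nonneg_borel[OF M] by (auto simp: A_def)
  have "(\<Inter>n. A n) = {x..}"
  proof (auto simp: A_def)
    fix y assume le: "\<forall>n. x - 1 / (real n + 1) \<le> y"
    show "x \<le> y"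
    proof (rule ccontr)
      assume "\<not> x \<le> y"
      then obtain n where "inverse (real (Suc n)) < x - y"
        using reals_Archimedean[of "x - y"] by auto
      then show False using le[rule_format, of n] by (simp add: inverse_eq_divide add.commute)
    qed
  next
    fix y n assume "x \<le> y" then show "x - 1 / (real n + 1) \<le> y"
      by (smt (verit) divide_nonneg_nonneg of_nat_0_le_iff)
  qed
  then have "(\<lambda>n. measure M (A n)) \<longlonglongrightarrow> tail M x"
    using finite_Lim_measure_decseq[OF rng dec] by (simp add: tail_def)
  then obtain n where n: "measure M (A n) < tail M x + \<epsilon>"
    using e order_tendstoD(2)[of _ "tail M x" sequentially "tail M x + \<epsilon>"]
    by (auto simp: eventually_sequentially)
  show ?thesis
  proof (intro exI[of _ "1 / (real n + 1)"] conjI allI impI)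
    fix y assume "x - 1 / (real n + 1) < y"
    then have "tail M y \<le> measure M (A n)"
      unfolding tail_def A_def by (intro finite_measure_mono) (auto simp: prob_on_nonneg_sets[OF M])
    then show "tail M y \<le> tail M x + \<epsilon>" using n by simp
  qed simp
qed

lemma tail_right_lim:
  assumes e: "\<epsilon> > 0"
  shows "\<exists>\<delta>>0. \<forall>y. y < x + \<delta> \<longrightarrow> tail_gt M x - \<epsilon> \<le> tail M y"
proof -
  define A where "A n = {x + 1 / (real n + 1)..}" for n :: nat
  have inc: "incseq A" unfolding A_def incseq_def by (auto simp: frac_le)
  have rng: "range A \<subseteq> sets M" using prob_on_nonneg_borel[OF M] by (auto simp: A_def)
  have "(\<Union>n. A n) = {x<..}"
  proof (auto simp: A_def)
    fix y assume "x < y"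
    then obtain n where "inverse (real (Suc n)) < y - x"
      using reals_Archimedean[of "y - x"] by auto
    then show "\<exists>n. x + 1 / (real n + 1) \<le> y"
      by (intro exI[of _ n]) (simp add: inverse_eq_divide add.commute)
  next
    fix n y assume "x + 1 / (real n + 1) \<le> y" then show "x < y"
      by (smt (verit) divide_pos_pos of_nat_0_le_iff)
  qed
  then have "(\<lambda>n. measure M (A n)) \<longlonglongrightarrow> tail_gt M x"
    using finite_Lim_measure_incseq[OF rng inc] by (simp add: tail_gt_def)
  then obtain n where n: "measure M (A n) > tail_gt M x - \<epsilon>"
    using e order_tendstoD(1)[of _ "tail_gt M x" sequentially "tail_gt M x - \<epsilon>"]
    by (auto simp: eventually_sequentially)
  show ?thesis
  proof (intro exI[of _ "1 / (real n + 1)"] conjI allI impI)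
    fix y assume "y < x + 1 / (real n + 1)"
    then have "measure M (A n) \<le> tail M y"
      unfolding tail_def A_def by (intro finite_measure_mono) (auto simp: prob_on_nonneg_sets[OF M])
    then show "tail_gt M x - \<epsilon> \<le> tail M y" using n by simp
  qed simp
qed

end

lemma AE_pos_exists:
  assumes "AE x in M. Q x" "A \<in> sets M" "emeasure M A > 0"
  shows "\<exists>x\<in>A. Q x"
proof (rule ccontr)
  assume nq: "\<not> (\<exists>x\<in>A. Q x)"
  from assms(1) have "AE x in M. x \<notin> A" by eventually_elim (use nq in auto)
  then have "emeasure M {x \<in> space M. x \<in> A} = 0" by (intro emeasure_eq_0_AE) simp
  moreover have "{x \<in> space M. x \<in> A} = A" using sets.sets_into_space[OF assms(2)] by auto
  ultimately show False using assms(3) by simp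
qed

lemma AE_atom:
  assumes "AE x in M. Q x" "{y} \<in> sets M" "emeasure M {y} > 0"
  shows "Q y"
  using AE_pos_exists[OF assms] by simp

lemma AE_proportional_densities:
  assumes sf: "sigma_finite_measure M"
    and f: "f \<in> borel_measurable M" and g: "g \<in> borel_measurable M"
    and F: "\<And>C. C \<in> sets M \<Longrightarrow> (\<integral>\<^sup>+x. f x * indicator C x \<partial>M) = \<nu> C * a"
    and G: "\<And>C. C \<in> sets M \<Longrightarrow> (\<integral>\<^sup>+x. g x * indicator C x \<partial>M) = \<nu> C * b"
  shows "AE x in M. f x * b = g x * a"
proof (rule sigma_finite_measure.density_unique2[OF sf])
  show "(\<lambda>x. f x * b) \<in> borel_measurable M" "(\<lambda>x. g x * a) \<in> borel_measurable M" using f g by auto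
  fix C assume C: "C \<in> sets M"
  have "(\<integral>\<^sup>+x\<in>C. f x * b \<partial>M) = (\<integral>\<^sup>+x. (f x * indicator C x) * b \<partial>M)"
    by (rule nn_integral_cong) (simp add: ac_simps)
  also have "\<dots> = \<nu> C * a * b" using F[OF C] f C by (subst nn_integral_multc) auto
  also have "\<dots> = \<nu> C * b * a" by (simp add: ac_simps)
  also have "\<dots> = (\<integral>\<^sup>+x. (g x * indicator C x) * a \<partial>M)" using G[OF C] g C by (subst nn_integral_multc) auto
  also have "\<dots> = (\<integral>\<^sup>+x\<in>C. g x * a \<partial>M)" by (rule nn_integral_cong) (simp add: ac_simps)
  finally show "(\<integral>\<^sup>+x\<in>C. f x * b \<partial>M) = (\<integral>\<^sup>+x\<in>C. g x * a \<partial>M)" .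
qed

lemma nat_multiple_bracket:
  fixes x e :: real
  assumes "0 \<le> x" "0 < e"
  shows "\<exists>n::nat. real n * e \<le> x \<and> x < real n * e + e"
proof -
  define n where "n = nat \<lfloor>x / e\<rfloor>"
  have "real n = of_int \<lfloor>x / e\<rfloor>" using assms by (simp add: n_def)
  then have "real n \<le> x / e" "x / e < real n + 1" by linarith+
  then show ?thesis using assms by (intro exI[of _ n]) (simp add: field_simps)
qed

lemma nat_mult_mem:
  fixes T :: "real set"
  assumes add: "\<And>u v. u \<in> T \<Longrightarrow> v \<in> T \<Longrightarrow> u + v \<in> T" and "0 \<in> T" "u \<in> T"
  shows "real n * u \<in> T"
  using assms by (induction n) (auto simp: algebra_simps)

text \<open>A closed subset of \<open>[0,\<infinity>)\<close> containing \<open>0\<close> and a positive point, closed under sums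
  and under nonnegative differences, is either all of \<open>[0,\<infinity>)\<close> or a lattice \<open>c\<int>\<^sub>+\<close>:
  the infimum \<open>c\<close> of its positive points is either a generator or zero.\<close>
lemma closed_additive_cases:
  fixes T :: "real set"
  assumes cl: "closed T" and z: "0 \<in> T" and nn: "T \<subseteq> {0..}"
    and add: "\<And>u v. u \<in> T \<Longrightarrow> v \<in> T \<Longrightarrow> u + v \<in> T"
    and dif: "\<And>u v. u \<in> T \<Longrightarrow> v \<in> T \<Longrightarrow> v \<le> u \<Longrightarrow> u - v \<in> T"
    and pos: "\<exists>u\<in>T. u > 0"
  shows "T = {0..} \<or> (\<exists>c>0. T = range (\<lambda>n::nat. c * real n))"
proof -
  define A where "A = T \<inter> {0<..}"
  define c where "c = Inf A"
  have ne: "A \<noteq> {}" using pos by (auto simp: A_def)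
  have bdd: "bdd_below A" by (auto simp: A_def bdd_below_def intro!: exI[of _ 0])
  have mult: "real n * u \<in> T" if "u \<in> T" for n u using nat_mult_mem[OF add z that] .
  show ?thesis
  proof (cases "c > 0")
    case True
    have "c \<in> closure A" unfolding c_def using ne bdd by (rule closure_contains_Inf)
    then have cT: "c \<in> T" using cl closure_mono[of A T] by (auto simp: A_def closure_closed)
    have "T \<subseteq> range (\<lambda>n::nat. c * real n)"
    proof
      fix x assume x: "x \<in> T"
      obtain n :: nat where n: "real n * c \<le> x" "x < real n * c + c"
        using nat_multiple_bracket[of x c] nn x True by auto
      have "x - real n * c \<in> T" using dif[OF x mult[OF cT] n(1)] .
      moreover have "x - real n * c \<notin> A"
        using cInf_lower[OF _ bdd, of "x - real n * c"] n(2) by (auto simp: c_def)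
      ultimately have "x = c * real n" using n(1) by (auto simp: A_def)
      then show "x \<in> range (\<lambda>n::nat. c * real n)" by auto
    qed
    moreover have "range (\<lambda>n::nat. c * real n) \<subseteq> T" using mult[OF cT] by (auto simp: mult.commute)
    ultimately show ?thesis using True by auto
  next
    case False
    have "x \<in> T" if x: "x \<ge> 0" for x
    proof -
      have "\<exists>y\<in>T. dist y x < \<epsilon>" if e: "\<epsilon> > 0" for \<epsilon>
      proof -
        obtain e' where e': "e' \<in> T" "0 < e'" "e' < \<epsilon>"
          using cInf_less_iff[OF ne bdd, of \<epsilon>] False e by (auto simp: c_def A_def)
        obtain n :: nat where n: "real n * e' \<le> x" "x < real n * e' + e'"
          using nat_multiple_bracket x e'(2) by blast
        then show ?thesis using mult[OF e'(1)] e' by (intro bexI[of _ "real n * e'"]) (auto simp: dist_real_def)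
      qed
      then show ?thesis using closed_approachable[OF cl] by blast
    qed
    then show ?thesis using nn by auto
  qed
qed

lemma mult_seq_power:
  fixes f :: "nat \<Rightarrow> real"
  assumes "f 0 = 1" "\<And>n m. f (n + m) = f n * f m"
  shows "f n = f 1 ^ n"
proof (induction n)
  case 0 then show ?case using assms by simp
next
  case (Suc n) then show ?case using assms(2)[of n 1] by simp
qed

lemma additive_nat_mult:
  assumes add: "\<And>u v. u \<ge> 0 \<Longrightarrow> v \<ge> 0 \<Longrightarrow> g (u + v) = g u + (g v :: real)" and "g 0 = 0" "u \<ge> 0"
  shows "g (real n * u) = real n * g u"
proof (induction n)
  case (Suc n)
  have "g (real (Suc n) * u) = g (real n * u + u)" by (simp add: algebra_simps)
  also have "\<dots> = g (real n * u) + g u" using assms by (intro add) auto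
  finally show ?case using Suc by (simp add: algebra_simps)
qed (use assms in simp)

text \<open>Cauchy's functional equation on \<open>[0,\<infinity>)\<close> for monotone functions: squeeze \<open>g t\<close>
  between the values at the neighbouring multiples of \<open>1/N\<close>.\<close>
lemma monotone_additive_linear:
  fixes g :: "real \<Rightarrow> real"
  assumes add: "\<And>u v. u \<ge> 0 \<Longrightarrow> v \<ge> 0 \<Longrightarrow> g (u + v) = g u + g v"
    and mono: "\<And>u v. 0 \<le> u \<Longrightarrow> u \<le> v \<Longrightarrow> g u \<le> g v"
    and t: "t \<ge> 0"
  shows "g t = t * g 1"
proof -
  have g0: "g 0 = 0" using add[of 0 0] by simp
  have g1: "g 1 \<ge> 0" using mono[of 0 1] g0 by simp
  have frac: "g (real k / real N) = real k * g 1 / real N" if N: "N > 0" for k N :: nat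
  proof -
    have "g 1 = real N * g (1 / real N)"
      using N additive_nat_mult[OF add g0, of "1 / real N" N] by simp
    then show ?thesis using additive_nat_mult[OF add g0, of "1 / real N" k] N by (simp add: field_simps)
  qed
  have bnd: "\<bar>g t - t * g 1\<bar> \<le> g 1 / real N" if N: "N > 0" for N :: nat
  proof -
    obtain k :: nat where k: "real k * (1 / real N) \<le> t" "t < real k * (1 / real N) + 1 / real N"
      using nat_multiple_bracket[OF t, of "1 / real N"] N by auto
    have l1: "real k / real N \<le> t" and l2: "t \<le> real (k + 1) / real N"
      using k by (auto simp: add_divide_distrib)
    have "real k * g 1 / real N \<le> g t" using mono[OF _ l1] frac[OF N, of k] by simp
    moreover have "g t \<le> real (k + 1) * g 1 / real N" using mono[OF t l2] frac[OF N, of "k + 1"] by simp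
    moreover have "real k / real N * g 1 \<le> t * g 1" using l1 g1 by (rule mult_right_mono)
    moreover have "t * g 1 \<le> real (k + 1) / real N * g 1" using l2 g1 by (rule mult_right_mono)
    ultimately show ?thesis by (simp add: abs_le_iff add_divide_distrib algebra_simps)
  qed
  show ?thesis
  proof (rule ccontr)
    assume "g t \<noteq> t * g 1"
    then have e: "\<bar>g t - t * g 1\<bar> > 0" by simp
    obtain N :: nat where N: "g 1 / \<bar>g t - t * g 1\<bar> < real N" using reals_Archimedean2 by blast
    moreover have "0 \<le> g 1 / \<bar>g t - t * g 1\<bar>" using g1 by simp
    ultimately have "real N > 0" by linarith
    then show False using bnd[of N] N e by (simp add: field_simps)
  qed
qed

lemma multiplicative_exp:
  fixes f :: "real \<Rightarrow> real"
  assumes pos: "\<And>u. u \<ge> 0 \<Longrightarrow> f u > 0"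
    and mult: "\<And>u v. u \<ge> 0 \<Longrightarrow> v \<ge> 0 \<Longrightarrow> f (u + v) = f u * f v"
    and anti: "\<And>u v. 0 \<le> u \<Longrightarrow> u \<le> v \<Longrightarrow> f v \<le> f u"
    and lt: "f 1 < 1"
  shows "\<exists>\<alpha>>0. \<forall>t\<ge>0. f t = exp (- \<alpha> * t)"
proof -
  define g where "g u = - ln (f u)" for u
  have add: "g (u + v) = g u + g v" if "u \<ge> 0" "v \<ge> 0" for u v
    using that pos[of u] pos[of v] by (simp add: g_def mult ln_mult)
  have mono: "g u \<le> g v" if "0 \<le> u" "u \<le> v" for u v
    using that anti[OF that] pos[of u] pos[of v] by (simp add: g_def)
  have "f t = exp (- g 1 * t)" if t: "t \<ge> 0" for t
  proof -
    have "ln (f t) = - g 1 * t" using monotone_additive_linear[OF add mono t] by (simp add: g_def)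
    then show ?thesis using exp_ln[OF pos[OF t]] by simp
  qed
  moreover have "g 1 > 0" using lt pos[of 1] by (simp add: g_def)
  ultimately show ?thesis by blast
qed

lemma le_by_epsilon:
  fixes u v K :: real
  assumes "\<And>\<epsilon>. \<epsilon> > 0 \<Longrightarrow> u \<le> v + K * \<epsilon>" "K \<ge> 0"
  shows "u \<le> v"
proof (rule field_le_epsilon)
  fix e :: real assume e: "e > 0"
  have "u \<le> v + K * (e / (K + 1))" using assms(1)[of "e / (K + 1)"] e assms(2) by simp
  also have "K * (e / (K + 1)) \<le> e" using e assms(2) by (simp add: field_simps)
  finally show "u \<le> v + e" by simp
qed

section \<open>Tails obeying a shift law almost everywhere\<close>

text \<open>Suppose \<open>tail Ma (s + d) = \<kappa>(d) \<cdot> tail Ma s\<close> holds for \<open>Mb\<close>-almost every \<open>s\<close>,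
  where \<open>Mb\<close> has support \<open>[t0,\<infinity>)\<close>. By one-sided continuity of tails the law then holds
  for every \<open>s > t0\<close>, and \<open>Ma\<close> can have no atoms above \<open>t0\<close>.\<close>
locale tail_shift_law =
  fixes Ma Mb :: "real measure" and t0 :: real and kap :: "real \<Rightarrow> real"
  assumes ha: "prob_on_nonneg Ma" and hb: "prob_on_nonneg Mb"
    and supp_b: "msupp Mb = {t0..}"
    and law: "\<And>d. d \<ge> 0 \<Longrightarrow> AE s in Mb. tail Ma (s + d) = kap d * tail Ma s"
    and kap_nn: "\<And>d. kap d \<ge> 0"
    and tail_a_pos: "\<And>x. tail Ma x > 0"
begin

lemma law_near:
  assumes d: "d \<ge> 0" and ab: "t0 \<le> \<alpha>" "\<alpha> < \<beta>"
  shows "\<exists>s. \<alpha> < s \<and> s < \<beta> \<and> tail Ma (s + d) = kap d * tail Ma s"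
proof -
  have m: "(\<alpha> + \<beta>) / 2 \<in> msupp Mb" using supp_b ab by auto
  have "emeasure Mb {\<alpha><..<\<beta>} > 0" using msupp_open_pos[OF hb m] ab by auto
  then show ?thesis
    using AE_pos_exists[OF law[OF d], of "{\<alpha><..<\<beta>}"] prob_on_nonneg_sets[OF hb] by auto
qed

lemma law_above:
  assumes x: "x > t0" and d: "d \<ge> 0"
  shows "tail Ma (x + d) = kap d * tail Ma x"
proof (rule antisym)
  show "tail Ma (x + d) \<le> kap d * tail Ma x"
  proof (rule le_by_epsilon[OF _ kap_nn])
    fix \<epsilon> :: real assume e: "\<epsilon> > 0"
    obtain \<delta> where \<delta>: "\<delta> > 0" "\<And>y. x - \<delta> < y \<Longrightarrow> tail Ma y \<le> tail Ma x + \<epsilon>"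
      using tail_left_cont[OF ha e, of x] by auto
    obtain s where s: "max t0 (x - \<delta>) < s" "s < x" "tail Ma (s + d) = kap d * tail Ma s"
      using law_near[OF d, of "max t0 (x - \<delta>)" x] x \<delta>(1) by auto
    have "tail Ma (x + d) \<le> tail Ma (s + d)" using s by (intro tail_mono[OF ha]) auto
    also have "\<dots> = kap d * tail Ma s" using s by simp
    also have "\<dots> \<le> kap d * (tail Ma x + \<epsilon>)"
      using \<delta>(2)[of s] s kap_nn[of d] by (intro mult_left_mono) auto
    finally show "tail Ma (x + d) \<le> kap d * tail Ma x + kap d * \<epsilon>" by (simp add: algebra_simps)
  qed
  show "kap d * tail Ma x \<le> tail Ma (x + d)"
  proof (rule le_by_epsilon[of _ _ 1])
    fix \<epsilon> :: real assume e: "\<epsilon> > 0"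
    obtain \<delta> where \<delta>: "\<delta> > 0" "\<And>y. x + d - \<delta> < y \<Longrightarrow> tail Ma y \<le> tail Ma (x + d) + \<epsilon>"
      using tail_left_cont[OF ha e, of "x + d"] by auto
    obtain s where s: "max t0 (x - \<delta>) < s" "s < x" "tail Ma (s + d) = kap d * tail Ma s"
      using law_near[OF d, of "max t0 (x - \<delta>)" x] x \<delta>(1) by auto
    have "kap d * tail Ma x \<le> kap d * tail Ma s"
      using s kap_nn[of d] by (intro mult_left_mono tail_mono[OF ha]) auto
    also have "\<dots> = tail Ma (s + d)" using s by simp
    also have "\<dots> \<le> tail Ma (x + d) + \<epsilon>" using \<delta>(2)[of "s + d"] s by auto
    finally show "kap d * tail Ma x \<le> tail Ma (x + d) + 1 * \<epsilon>" by simp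
  qed simp
qed

lemma law_tail_gt:
  assumes x: "x \<ge> t0" and d: "d \<ge> 0"
  shows "tail_gt Ma (x + d) = kap d * tail_gt Ma x"
proof (rule antisym)
  show "kap d * tail_gt Ma x \<le> tail_gt Ma (x + d)"
  proof (rule le_by_epsilon[OF _ kap_nn])
    fix \<epsilon> :: real assume e: "\<epsilon> > 0"
    obtain \<delta> where \<delta>: "\<delta> > 0" "\<And>y. y < x + \<delta> \<Longrightarrow> tail_gt Ma x - \<epsilon> \<le> tail Ma y"
      using tail_right_lim[OF ha e, of x] by auto
    obtain s where s: "x < s" "s < x + \<delta>" "tail Ma (s + d) = kap d * tail Ma s"
      using law_near[OF d, of x "x + \<delta>"] x \<delta>(1) by auto
    have "kap d * (tail_gt Ma x - \<epsilon>) \<le> kap d * tail Ma s"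
      using \<delta>(2)[of s] s kap_nn[of d] by (intro mult_left_mono) auto
    also have "\<dots> = tail Ma (s + d)" using s by simp
    also have "\<dots> \<le> tail_gt Ma (x + d)" using s by (intro tail_le_tail_gt[OF ha]) auto
    finally show "kap d * tail_gt Ma x \<le> tail_gt Ma (x + d) + kap d * \<epsilon>" by (simp add: algebra_simps)
  qed
  show "tail_gt Ma (x + d) \<le> kap d * tail_gt Ma x"
  proof (rule le_by_epsilon[of _ _ 1])
    fix \<epsilon> :: real assume e: "\<epsilon> > 0"
    obtain \<delta> where \<delta>: "\<delta> > 0" "\<And>y. y < x + d + \<delta> \<Longrightarrow> tail_gt Ma (x + d) - \<epsilon> \<le> tail Ma y"
      using tail_right_lim[OF ha e, of "x + d"] by auto
    obtain s where s: "x < s" "s < x + \<delta>" "tail Ma (s + d) = kap d * tail Ma s"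
      using law_near[OF d, of x "x + \<delta>"] x \<delta>(1) by auto
    have "tail_gt Ma (x + d) - \<epsilon> \<le> tail Ma (s + d)" using \<delta>(2)[of "s + d"] s by auto
    also have "\<dots> = kap d * tail Ma s" using s by simp
    also have "\<dots> \<le> kap d * tail_gt Ma x"
      using s kap_nn[of d] by (intro mult_left_mono tail_le_tail_gt[OF ha]) auto
    finally show "tail_gt Ma (x + d) \<le> kap d * tail_gt Ma x + 1 * \<epsilon>" by simp
  qed simp
qed

text \<open>An atom \<open>j\<close> at \<open>x > t0\<close> would, by the shift law, force atoms of size at least
  \<open>k\<cdot>j\<close> (with \<open>k = tail Ma (x+1) / tail Ma x\<close>) at every point of \<open>[x, x+1]\<close>.\<close>
lemma no_atom_above:
  assumes x: "x > t0"
  shows "measure Ma {x} = 0"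
proof (rule ccontr)
  interpret prob_space Ma using prob_on_nonneg_prob_space[OF ha] .
  define j where "j = measure Ma {x}"
  define k where "k = tail Ma (x + 1) / tail Ma x"
  assume "measure Ma {x} \<noteq> 0"
  then have j: "j > 0" by (simp add: j_def zero_less_measure_iff)
  have kpos: "k > 0" using tail_a_pos[of x] tail_a_pos[of "x + 1"] by (simp add: k_def)
  have atom_lb: "measure Ma {x + d} \<ge> k * j" if d: "0 \<le> d" "d \<le> 1" for d
  proof -
    have atom: "measure Ma {x + d} = kap d * j"
      using law_above[OF x d(1)] law_tail_gt[of x d] x d tail_split[OF ha, of "x + d"]
        tail_split[OF ha, of x] by (simp add: j_def distrib_left)
    have "kap d = tail Ma (x + d) / tail Ma x"
      using law_above[OF x d(1)] tail_a_pos[of x] by simp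
    moreover have "k \<le> tail Ma (x + d) / tail Ma x"
      unfolding k_def using tail_a_pos[of x] d by (intro divide_right_mono tail_mono[OF ha]) auto
    ultimately have "k \<le> kap d" by simp
    then show ?thesis using mult_right_mono[of k "kap d" j] atom j by simp
  qed
  obtain N :: nat where N: "1 / (k * j) < real N" using reals_Archimedean2 by blast
  moreover have "0 < 1 / (k * j)" using kpos j by simp
  ultimately have "real N > 0" by linarith
  then have Np: "N > 0" by simp
  define F where "F = (\<lambda>i. x + real i / real N) ` {..<N}"
  have inj: "inj_on (\<lambda>i. x + real i / real N) {..<N}" using Np by (auto simp: inj_on_def)
  have "real N * (k * j) = (\<Sum>i<N. k * j)" by simp
  also have "\<dots> \<le> (\<Sum>i<N. measure Ma {x + real i / real N})"
    using Np by (intro sum_mono atom_lb) (auto simp: field_simps)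
  also have "\<dots> = (\<Sum>y\<in>F. measure Ma {y})"
    unfolding F_def by (rule sum.reindex[OF inj, unfolded comp_def, symmetric])
  also have "\<dots> = measure Ma F"
    by (rule measure_eq_sum_singleton[symmetric]) (auto simp: F_def prob_on_nonneg_sets[OF ha])
  also have "\<dots> \<le> 1" by (rule prob_le_1)
  finally show False using N kpos j by (simp add: field_simps)
qed

end

lemma Rmap_simp [simp]: "Rmap (r, s, t) = (t + max (r - s) 0, t + max (s - r) 0, min r s)"
  by (simp add: Rmap_def)

lemma Rmap_conv: "Rmap x = (snd (snd x) + max (fst x - fst (snd x)) 0,
    snd (snd x) + max (fst (snd x) - fst x) 0, min (fst x) (fst (snd x)))"
  by (cases x) simp

lemma isCont_Rmap: "isCont Rmap x"
  unfolding Rmap_conv[abs_def] by (intro continuous_intros)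

lemma Rmap_borel: "Rmap \<in> borel_measurable borel"
  by (intro borel_measurable_continuous_onI continuous_at_imp_continuous_on ballI isCont_Rmap)

definition swap12 :: "'a \<times> 'b \<times> 'c \<Rightarrow> 'b \<times> 'a \<times> 'c" where
  "swap12 = (\<lambda>(r, s, t). (s, r, t))"

lemma swap12_simp [simp]: "swap12 (r, s, t) = (s, r, t)"
  by (simp add: swap12_def)

lemma Rmap_swap12: "Rmap \<circ> swap12 = swap12 \<circ> Rmap"
  by (auto simp: fun_eq_iff max_def min_def)

lemma measurable_swap12 [measurable]:
  "swap12 \<in> M1 \<Otimes>\<^sub>M (M2 \<Otimes>\<^sub>M M3) \<rightarrow>\<^sub>M M2 \<Otimes>\<^sub>M (M1 \<Otimes>\<^sub>M M3)"
  unfolding swap12_def by measurable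

lemma sets_pair3_borel:
  assumes "sets M1 = sets borel" "sets M2 = sets borel" "sets M3 = sets borel"
  shows "sets (M1 \<Otimes>\<^sub>M (M2 \<Otimes>\<^sub>M M3)) = sets (borel :: (real \<times> real \<times> real) measure)"
proof -
  have "sets (M1 \<Otimes>\<^sub>M (M2 \<Otimes>\<^sub>M M3)) = sets (borel \<Otimes>\<^sub>M (borel \<Otimes>\<^sub>M borel) :: (real \<times> real \<times> real) measure)"
    using assms by (intro sets_pair_measure_cong) auto
  then show ?thesis by (simp only: borel_prod)
qed

lemma distr_swap12:
  assumes "prob_space M1" "prob_space M2" "prob_space M3"
  shows "distr (M1 \<Otimes>\<^sub>M (M2 \<Otimes>\<^sub>M M3)) (M2 \<Otimes>\<^sub>M (M1 \<Otimes>\<^sub>M M3)) swap12 = M2 \<Otimes>\<^sub>M (M1 \<Otimes>\<^sub>M M3)"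
proof -
  interpret q1: prob_space M1 by fact
  interpret q2: prob_space M2 by fact
  interpret q3: prob_space M3 by fact
  interpret q13: pair_prob_space M1 M3 ..
  interpret q23: pair_prob_space M2 M3 ..
  let ?P = "M1 \<Otimes>\<^sub>M (M2 \<Otimes>\<^sub>M M3)" and ?Q = "M2 \<Otimes>\<^sub>M (M1 \<Otimes>\<^sub>M M3)"
  show ?thesis
  proof (rule pair_measure_eqI[symmetric])
    show "sigma_finite_measure M2" "sigma_finite_measure (M1 \<Otimes>\<^sub>M M3)" ..
    show "sets ?Q = sets (distr ?P ?Q swap12)" by simp
    fix A C assume A: "A \<in> sets M2" and C: "C \<in> sets (M1 \<Otimes>\<^sub>M M3)"
    have pre: "swap12 -` (A \<times> C) \<inter> space ?P \<in> sets ?P"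
      using A C by measurable
    have slice: "Pair r -` (swap12 -` (A \<times> C) \<inter> space ?P) = A \<times> Pair r -` C"
      if r: "r \<in> space M1" for r
      using r sets.sets_into_space[OF A] sets.sets_into_space[OF C] by (auto simp: space_pair_measure)
    have "emeasure (distr ?P ?Q swap12) (A \<times> C) = emeasure ?P (swap12 -` (A \<times> C) \<inter> space ?P)"
      using A C by (intro emeasure_distr measurable_swap12) (auto intro: pair_measureI)
    also have "\<dots> = (\<integral>\<^sup>+r. emeasure (M2 \<Otimes>\<^sub>M M3) (Pair r -` (swap12 -` (A \<times> C) \<inter> space ?P)) \<partial>M1)"
      by (rule q23.P.emeasure_pair_measure_alt[OF pre])
    also have "\<dots> = (\<integral>\<^sup>+r. emeasure M2 A * emeasure M3 (Pair r -` C) \<partial>M1)"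
    proof (rule nn_integral_cong)
      fix r assume r: "r \<in> space M1"
      show "emeasure (M2 \<Otimes>\<^sub>M M3) (Pair r -` (swap12 -` (A \<times> C) \<inter> space ?P))
          = emeasure M2 A * emeasure M3 (Pair r -` C)"
        unfolding slice[OF r] using A sets_Pair1[OF C] by (rule q3.emeasure_pair_measure_Times)
    qed
    also have "\<dots> = emeasure M2 A * emeasure (M1 \<Otimes>\<^sub>M M3) C"
      using C by (simp add: q3.emeasure_pair_measure_alt nn_integral_cmult q3.measurable_emeasure_Pair)
    finally show "emeasure M2 A * emeasure (M1 \<Otimes>\<^sub>M M3) C = emeasure (distr ?P ?Q swap12) (A \<times> C)" ..
  qed
qed

section \<open>Consequences of the invariance \<open>R\<mu> = \<mu>\<close>\<close>

locale R_invariant =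
  fixes p1 p2 p3 :: "real measure"
  assumes h1: "prob_on_nonneg p1" and h2: "prob_on_nonneg p2" and h3: "prob_on_nonneg p3"
  assumes hR: "distr (p1 \<Otimes>\<^sub>M (p2 \<Otimes>\<^sub>M p3)) (p1 \<Otimes>\<^sub>M (p2 \<Otimes>\<^sub>M p3)) Rmap
               = p1 \<Otimes>\<^sub>M (p2 \<Otimes>\<^sub>M p3)"
begin

abbreviation "P \<equiv> p1 \<Otimes>\<^sub>M (p2 \<Otimes>\<^sub>M p3)"
abbreviation "S1 \<equiv> msupp p1"
abbreviation "S2 \<equiv> msupp p2"
abbreviation "S3 \<equiv> msupp p3"

abbreviation "tmin \<equiv> Inf S3"

sublocale q1: prob_space p1 using prob_on_nonneg_prob_space[OF h1] .
sublocale q2: prob_space p2 using prob_on_nonneg_prob_space[OF h2] .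
sublocale q3: prob_space p3 using prob_on_nonneg_prob_space[OF h3] .
sublocale q23: pair_prob_space p2 p3 ..

lemma sp1 [simp]: "space p1 = UNIV" using prob_on_nonneg_space[OF h1] .
lemma sp2 [simp]: "space p2 = UNIV" using prob_on_nonneg_space[OF h2] .
lemma sp3 [simp]: "space p3 = UNIV" using prob_on_nonneg_space[OF h3] .
lemma spP [simp]: "space P = UNIV" by (simp add: space_pair_measure)

lemma sets1 [measurable_cong]: "sets p1 = sets borel" using prob_on_nonneg_sets[OF h1] .
lemma sets2 [measurable_cong]: "sets p2 = sets borel" using prob_on_nonneg_sets[OF h2] .
lemma sets3 [measurable_cong]: "sets p3 = sets borel" using prob_on_nonneg_sets[OF h3] .

lemma setsP: "sets P = sets (borel :: (real \<times> real \<times> real) measure)"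
  by (rule sets_pair3_borel[OF sets1 sets2 sets3])

lemma Rmap_measurable: "Rmap \<in> measurable P P"
  using Rmap_borel by (simp add: measurable_cong_sets[OF setsP setsP])

text \<open>The hypotheses are symmetric in \<open>\<pi>\<^sub>1\<close> and \<open>\<pi>\<^sub>2\<close>; every result below is thus also
  available with the roles of \<open>\<pi>\<^sub>1\<close> and \<open>\<pi>\<^sub>2\<close> exchanged, under the prefix \<open>swap\<close>.  These
  copies appear once the enclosing context block is closed, which is why the development
  below reopens the locale before a result is used for the exchanged roles.\<close>
lemma R_invariant_swap: "R_invariant p2 p1 p3"
proof
  let ?Q = "p2 \<Otimes>\<^sub>M (p1 \<Otimes>\<^sub>M p3)"
  have setsQ: "sets ?Q = sets (borel :: (real \<times> real \<times> real) measure)"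
    by (rule sets_pair3_borel[OF sets2 sets1 sets3])
  have R: "Rmap \<in> measurable ?Q ?Q"
    using Rmap_borel by (simp add: measurable_cong_sets[OF setsQ setsQ])
  have Q: "distr P ?Q swap12 = ?Q"
    by (rule distr_swap12) unfold_locales
  have "distr ?Q ?Q Rmap = distr P ?Q (Rmap \<circ> swap12)"
    by (subst Q[symmetric], rule distr_distr[OF R measurable_swap12])
  also have "\<dots> = distr (distr P P Rmap) ?Q swap12"
    by (simp add: Rmap_swap12 distr_distr[OF measurable_swap12 Rmap_measurable])
  finally show "distr ?Q ?Q Rmap = ?Q" by (simp add: hR Q)
qed (use h1 h2 h3 in auto)

sublocale swap: R_invariant p2 p1 p3
  by (rule R_invariant_swap)

lemma emeasure_Rmap_vimage: "E \<in> sets P \<Longrightarrow> emeasure P (Rmap -` E) = emeasure P E"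
  using emeasure_distr[OF Rmap_measurable, of E] hR by simp

lemma emeasure_box: "A \<in> sets borel \<Longrightarrow> B \<in> sets borel \<Longrightarrow> C \<in> sets borel \<Longrightarrow>
   emeasure P (A \<times> (B \<times> C)) = emeasure p1 A * emeasure p2 B * emeasure p3 C"
  by (simp add: q23.P.emeasure_pair_measure_Times q3.emeasure_pair_measure_Times sets1 sets2 sets3 mult.assoc)

lemma open_meets_supp_pos:
  assumes p: "p \<in> S1 \<times> (S2 \<times> S3)" and Ob: "open Ob" "p \<in> Ob"
  shows "emeasure P Ob > 0"
proof -
  obtain W1 W' where W: "open W1" "open W'" "p \<in> W1 \<times> W'" "W1 \<times> W' \<subseteq> Ob"
    using open_prod_elim[OF Ob] by blast
  obtain W2 W3 where W2: "open W2" "open W3" "snd p \<in> W2 \<times> W3" "W2 \<times> W3 \<subseteq> W'"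
  proof -
    have "snd p \<in> W'" using W(3) by (cases p) auto
    from open_prod_elim[OF W(2) this] show ?thesis using that by blast
  qed
  have "emeasure p1 W1 > 0" "emeasure p2 W2 > 0" "emeasure p3 W3 > 0"
    using msupp_open_pos[OF h1, of "fst p" W1] msupp_open_pos[OF h2, of "fst (snd p)" W2]
      msupp_open_pos[OF h3, of "snd (snd p)" W3] p W W2 by (cases p; auto)+
  then have "0 < emeasure P (W1 \<times> (W2 \<times> W3))"
    using W W2 by (simp add: emeasure_box ennreal_zero_less_mult_iff)
  also have "\<dots> \<le> emeasure P Ob"
    using W W2 Ob(1) by (intro emeasure_mono) (auto simp: setsP)
  finally show ?thesis .
qed

text \<open>\<open>R\<close> cannot map a point of the support into an open null set, since the preimage of that
  set is an open null set as well.\<close>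
lemma Rmap_avoids_null_open:
  assumes p: "p \<in> S1 \<times> (S2 \<times> S3)" and N: "open N" "emeasure P N = 0"
  shows "Rmap p \<notin> N"
proof
  assume "Rmap p \<in> N"
  moreover have "open (Rmap -` N)" using N(1) isCont_Rmap by (intro continuous_open_vimage) auto
  ultimately have "emeasure P (Rmap -` N) > 0" using open_meets_supp_pos[OF p] by auto
  moreover have "N \<in> sets P" using N(1) by (simp add: setsP)
  ultimately show False using emeasure_Rmap_vimage N(2) by simp
qed

text \<open>\<open>R\<close> maps \<open>S1 \<times> S2 \<times> S3\<close> into itself; we record the first and third coordinates,
  the second one is the first one for the exchanged roles.\<close>
lemma supp_R:
  assumes "r \<in> S1" "s \<in> S2" "t \<in> S3"
  shows "t + max (r - s) 0 \<in> S1" "min r s \<in> S3"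
proof -
  have p: "(r, s, t) \<in> S1 \<times> (S2 \<times> S3)" using assms by auto
  show "t + max (r - s) 0 \<in> S1"
  proof (rule ccontr)
    assume "t + max (r - s) 0 \<notin> S1"
    then obtain V where V: "open V" "t + max (r - s) 0 \<in> V" "emeasure p1 V = 0"
      using notin_msupp_iff[OF h1] by blast
    have "emeasure P (V \<times> (UNIV \<times> UNIV)) = 0" using V emeasure_box[of V UNIV UNIV] by simp
    then have "Rmap (r, s, t) \<notin> V \<times> (UNIV \<times> UNIV)"
      using V(1) by (intro Rmap_avoids_null_open[OF p]) (auto intro: open_Times)
    then show False using V by simp
  qed
  show "min r s \<in> S3"
  proof (rule ccontr)
    assume "min r s \<notin> S3"
    then obtain V where V: "open V" "min r s \<in> V" "emeasure p3 V = 0"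
      using notin_msupp_iff[OF h3] by blast
    have "emeasure P (UNIV \<times> (UNIV \<times> V)) = 0" using V emeasure_box[of UNIV UNIV V] by simp
    then have "Rmap (r, s, t) \<notin> UNIV \<times> (UNIV \<times> V)"
      using V(1) by (intro Rmap_avoids_null_open[OF p]) (auto intro: open_Times)
    then show False using V by simp
  qed
qed

end

section \<open>Structure of the supports\<close>

context R_invariant
begin

lemma tmin_in: "tmin \<in> S3"
  using Inf_msupp_in[OF h3] .

lemma tmin_le: "x \<in> S3 \<Longrightarrow> tmin \<le> x"
  using Inf_msupp_le[OF h3] .

lemma S3_mins: "c \<in> S3 \<Longrightarrow> \<exists>r\<in>S1. \<exists>s\<in>S2. c = min r s"
proof -
  assume c: "c \<in> S3"
  obtain a1 a2 where a: "a1 \<in> S1" "a2 \<in> S2" using msupp_nonempty[OF h1] msupp_nonempty[OF h2] by blast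
  show ?thesis using supp_R(1)[OF a c] swap.supp_R(1)[OF a(2,1) c]
    by (intro bexI[of _ "c + max (a1 - a2) 0"] bexI[of _ "c + max (a2 - a1) 0"]) auto
qed

lemma tmin_eq_min: "tmin = min (Inf S1) (Inf S2)"
proof (rule antisym)
  show "tmin \<le> min (Inf S1) (Inf S2)"
    by (rule tmin_le, rule supp_R(2)[OF Inf_msupp_in[OF h1] Inf_msupp_in[OF h2] tmin_in])
  obtain r s where rs: "r \<in> S1" "s \<in> S2" "tmin = min r s" using S3_mins[OF tmin_in] by blast
  then show "min (Inf S1) (Inf S2) \<le> tmin"
    using Inf_msupp_le[OF h1 rs(1)] Inf_msupp_le[OF h2 rs(2)] by (auto simp: min_le_iff_disj)
qed

end

locale R_invariant_nondeg = R_invariant +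
  assumes nondeg: "S3 \<noteq> {tmin}"
begin

sublocale swap: R_invariant_nondeg p2 p1 p3
  using R_invariant_swap nondeg by (simp add: R_invariant_nondeg_def R_invariant_nondeg_axioms_def)

lemma above_tmin: "\<exists>t1\<in>S3. tmin < t1"
proof -
  obtain t1 where "t1 \<in> S3" "t1 \<noteq> tmin" using nondeg tmin_in by blast
  then show ?thesis using tmin_le by force
qed

text \<open>If \<open>S1\<close> started strictly after \<open>tmin\<close>, then \<open>S2 = {tmin}\<close> and hence \<open>S3 = {tmin}\<close>.\<close>
lemma Inf_S1: "Inf S1 = tmin"
proof (rule ccontr)
  assume "Inf S1 \<noteq> tmin"
  then have lt: "tmin < Inf S1" "Inf S2 = tmin" using tmin_eq_min by (auto simp: min_def split: if_splits)
  have S2: "s = tmin" if s: "s \<in> S2" for s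
  proof -
    have "Inf S1 \<le> tmin + max (Inf S1 - s) 0"
      using Inf_msupp_le[OF h1 supp_R(1)[OF Inf_msupp_in[OF h1] s tmin_in]] .
    then show ?thesis using lt Inf_msupp_le[OF h2 s] by (auto simp: max_def split: if_splits)
  qed
  have "S3 \<subseteq> {tmin}"
  proof
    fix c assume "c \<in> S3"
    then obtain r s where "r \<in> S1" "s \<in> S2" "c = min r s" using S3_mins by blast
    then show "c \<in> {tmin}" using S2 Inf_msupp_le[OF h1 \<open>r \<in> S1\<close>] lt by (auto simp: min_def)
  qed
  then show False using nondeg tmin_in by auto
qed

lemma tmin_in_S1: "tmin \<in> S1"
  using Inf_msupp_in[OF h1] Inf_S1 by simp

lemma tmin_le_S1: "r \<in> S1 \<Longrightarrow> tmin \<le> r"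
  using Inf_msupp_le[OF h1] Inf_S1 by force

end

context R_invariant_nondeg
begin

lemma S1_shift: "r \<in> S1 \<Longrightarrow> t \<in> S3 \<Longrightarrow> r + (t - tmin) \<in> S1"
  using supp_R(1)[of r tmin t] swap.tmin_in_S1 tmin_le_S1[of r] by (simp add: algebra_simps)

lemma S1_unbounded: "\<exists>r\<in>S1. x \<le> r"
proof -
  obtain t1 where t1: "t1 \<in> S3" "tmin < t1" using above_tmin by blast
  have mult: "tmin + real n * (t1 - tmin) \<in> S1" for n
  proof (induction n)
    case (Suc n) then show ?case using S1_shift[OF Suc t1(1)] by (simp add: algebra_simps)
  qed (simp add: tmin_in_S1)
  obtain n where "x - tmin < real n * (t1 - tmin)"
    using ex_less_of_nat_mult[of "t1 - tmin" "x - tmin"] t1(2) by auto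
  then show ?thesis using mult[of n] by (intro bexI[of _ "tmin + real n * (t1 - tmin)"]) auto
qed

end

context R_invariant_nondeg
begin

lemma S1_eq_S3: "S1 = S3"
proof
  show "S3 \<subseteq> S1" using supp_R(1)[OF tmin_in_S1 swap.tmin_in_S1] by auto
  show "S1 \<subseteq> S3"
  proof
    fix r assume r: "r \<in> S1"
    obtain s where "s \<in> S2" "r \<le> s" using swap.S1_unbounded by blast
    then show "r \<in> S3" using supp_R(2)[OF r _ tmin_in, of s] by (simp add: min_def)
  qed
qed

end

context R_invariant_nondeg
begin

text \<open>The shifted support \<open>S3 - tmin\<close> is closed under sums and nonnegative differences, so
  it is either \<open>[0,\<infinity>)\<close> or a lattice \<open>c\<int>\<^sub>+\<close>.\<close>
lemma support_cases:
  "(\<lambda>x. x - tmin) ` S3 = {0..} \<or> (\<exists>c>0. (\<lambda>x. x - tmin) ` S3 = range (\<lambda>n::nat. c * real n))"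
proof (rule closed_additive_cases)
  let ?T = "(\<lambda>x. x - tmin) ` S3"
  have memT: "u \<in> ?T \<longleftrightarrow> tmin + u \<in> S3" for u
    by (auto intro: image_eqI[of _ _ "tmin + u"])
  have "?T = (+) (- tmin) ` S3" by (auto simp: image_def)
  then show "closed ?T" using closed_translation[OF closed_msupp, of "- tmin" p3] by (simp only:)
  show "0 \<in> ?T" using memT tmin_in by simp
  show "?T \<subseteq> {0..}" using tmin_le by auto
  show "u + v \<in> ?T" if "u \<in> ?T" "v \<in> ?T" for u v
    using S1_shift[of "tmin + u" "tmin + v"] that by (simp add: memT S1_eq_S3 add.assoc)
  show "u - v \<in> ?T" if "u \<in> ?T" "v \<in> ?T" "v \<le> u" for u v
    using supp_R(1)[of "tmin + u" "tmin + v" tmin] that tmin_in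
    by (simp add: memT S1_eq_S3 swap.S1_eq_S3)
  show "\<exists>u\<in>?T. u > 0" using above_tmin by (auto simp: memT)
qed

end

section \<open>Identities between the tails\<close>

text \<open>\<open>cross_tail M N d\<close> is the probability that \<open>X \<ge> Y + d\<close> for independent \<open>X \<sim> M\<close>, \<open>Y \<sim> N\<close>.\<close>
definition cross_tail :: "real measure \<Rightarrow> real measure \<Rightarrow> real \<Rightarrow> real" where
  "cross_tail M N d = enn2real (\<integral>\<^sup>+x. emeasure M {x + d..} \<partial>N)"

lemma cross_tail_nonneg [simp]: "cross_tail M N d \<ge> 0"
  by (simp add: cross_tail_def)

lemma cross_tail_eq:
  assumes "prob_space M" "prob_space N"
  shows "(\<integral>\<^sup>+x. emeasure M {x + d..} \<partial>N) = ennreal (cross_tail M N d)"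
proof -
  interpret M: prob_space M by fact
  interpret N: prob_space N by fact
  have "(\<integral>\<^sup>+x. emeasure M {x + d..} \<partial>N) \<le> (\<integral>\<^sup>+x. 1 \<partial>N)"
    by (intro nn_integral_mono) (simp add: M.measure_le_1 M.emeasure_eq_measure)
  also have "\<dots> < \<top>" by (simp add: N.emeasure_space_1)
  finally show ?thesis unfolding cross_tail_def by (intro ennreal_enn2real[symmetric]) auto
qed

context R_invariant
begin

text \<open>For every upward closed set \<open>U\<close>, \<open>min r s \<in> U\<close> iff \<open>r, s \<in> U\<close>; hence
  \<open>\<pi>\<^sub>3(U) = \<pi>\<^sub>1(U) \<pi>\<^sub>2(U)\<close>.\<close>
lemma upper_set_product:
  assumes U: "U \<in> sets borel" and up: "\<And>x y. x \<in> U \<Longrightarrow> x \<le> y \<Longrightarrow> y \<in> U"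
  shows "measure p3 U = measure p1 U * measure p2 U"
proof -
  have "min r s \<in> U \<longleftrightarrow> r \<in> U \<and> s \<in> U" for r s
    using up[of "min r s" r] up[of "min r s" s] by (cases "r \<le> s") (auto simp: min_def)
  then have "Rmap -` (UNIV \<times> (UNIV \<times> U)) = U \<times> (U \<times> UNIV)" by (auto simp: Rmap_conv)
  then have "emeasure P (UNIV \<times> (UNIV \<times> U)) = emeasure P (U \<times> (U \<times> UNIV))"
    using emeasure_Rmap_vimage[of "UNIV \<times> (UNIV \<times> U)"] U by (simp add: sets1 sets2 sets3)
  then show ?thesis using U
    by (simp add: emeasure_box q1.emeasure_eq_measure q2.emeasure_eq_measure q3.emeasure_eq_measure
        q1.prob_space[simplified] q2.prob_space[simplified] q3.prob_space[simplified]
        ennreal_mult''[symmetric] ennreal_inj del: ennreal_mult'')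
qed

lemma tail_product: "tail p3 x = tail p1 x * tail p2 x"
  unfolding tail_def by (rule upper_set_product) auto

lemma tail_gt_product: "tail_gt p3 x = tail_gt p1 x * tail_gt p2 x"
  unfolding tail_gt_def by (rule upper_set_product) auto

text \<open>The key identity: the events \<open>{s \<ge> r + d, t \<in> C}\<close> and \<open>{s \<ge> r + d, r \<in> C}\<close>
  correspond under \<open>R\<close>, so the density of \<open>r \<mapsto> \<pi>\<^sub>2([r+d,\<infinity>))\<close> with respect to \<open>\<pi>\<^sub>1\<close> is
  proportional to \<open>\<pi>\<^sub>3\<close>.\<close>
lemma tail_identity:
  assumes d: "d \<ge> 0" and C: "C \<in> sets borel"
  shows "(\<integral>\<^sup>+r. emeasure p2 {r + d..} * indicator C r \<partial>p1)
       = emeasure p3 C * (\<integral>\<^sup>+r. emeasure p2 {r + d..} \<partial>p1)"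
proof -
  define E where "E = {x::real \<times> real \<times> real. fst x + d \<le> fst (snd x) \<and> snd (snd x) \<in> C}"
  have [measurable]: "C \<in> sets p3" "C \<in> sets p1" using C sets3 sets1 by auto
  have "E = {x \<in> space P. fst x + d \<le> fst (snd x) \<and> snd (snd x) \<in> C}" by (simp add: E_def)
  also have "\<dots> \<in> sets P" by measurable
  finally have Em: "E \<in> sets P" .
  have RE: "Rmap -` E = {x. fst x + d \<le> fst (snd x) \<and> fst x \<in> C}"
    using d by (auto simp: E_def Rmap_conv min_def max_def)
  have "Rmap -` E = {x \<in> space P. fst x + d \<le> fst (snd x) \<and> fst x \<in> C}" by (simp add: RE)
  also have "\<dots> \<in> sets P" by measurable
  finally have REm: "Rmap -` E \<in> sets P" .
  have "emeasure P (Rmap -` E) = (\<integral>\<^sup>+r. emeasure (p2 \<Otimes>\<^sub>M p3) (Pair r -` (Rmap -` E)) \<partial>p1)"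
    by (rule q23.P.emeasure_pair_measure_alt[OF REm])
  also have "\<dots> = (\<integral>\<^sup>+r. emeasure p2 {r + d..} * indicator C r \<partial>p1)"
  proof (rule nn_integral_cong)
    fix r
    have "Pair r -` (Rmap -` E) = (if r \<in> C then {r + d..} \<times> UNIV else {})" unfolding RE by auto
    then show "emeasure (p2 \<Otimes>\<^sub>M p3) (Pair r -` (Rmap -` E)) = emeasure p2 {r + d..} * indicator C r"
      by (simp add: q3.emeasure_pair_measure_Times q3.emeasure_space_1[simplified])
  qed
  finally have lhs: "emeasure P (Rmap -` E) = (\<integral>\<^sup>+r. emeasure p2 {r + d..} * indicator C r \<partial>p1)" .
  have "emeasure P E = (\<integral>\<^sup>+r. emeasure (p2 \<Otimes>\<^sub>M p3) (Pair r -` E) \<partial>p1)"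
    by (rule q23.P.emeasure_pair_measure_alt[OF Em])
  also have "\<dots> = (\<integral>\<^sup>+r. emeasure p2 {r + d..} * emeasure p3 C \<partial>p1)"
  proof (rule nn_integral_cong)
    fix r
    have "Pair r -` E = {r + d..} \<times> C" unfolding E_def by auto
    then show "emeasure (p2 \<Otimes>\<^sub>M p3) (Pair r -` E) = emeasure p2 {r + d..} * emeasure p3 C"
      using C by (simp add: q3.emeasure_pair_measure_Times sets3)
  qed
  also have "\<dots> = (\<integral>\<^sup>+r. emeasure p2 {r + d..} \<partial>p1) * emeasure p3 C"
    using tail_measurable[OF h2, of d]
    by (intro nn_integral_multc) (simp add: measurable_cong_sets[OF sets1 refl])
  finally show ?thesis using lhs emeasure_Rmap_vimage[OF Em] by (simp add: mult.commute)
qed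

text \<open>Comparing the densities for the shifts \<open>0\<close> and \<open>d\<close>: almost surely in \<open>r\<close>,
  the tail of \<open>\<pi>\<^sub>2\<close> satisfies a shift law.\<close>
lemma tail_shift_AE:
  assumes d: "d \<ge> 0"
  shows "AE r in p1. tail p2 (r + d) * cross_tail p2 p1 0 = tail p2 r * cross_tail p2 p1 d"
proof -
  have meas: "(\<lambda>r. emeasure p2 {r + d..}) \<in> borel_measurable p1" for d
    using tail_measurable[OF h2, of d] by (simp add: measurable_cong_sets[OF sets1 refl])
  have "AE r in p1. emeasure p2 {r + d..} * (\<integral>\<^sup>+r. emeasure p2 {r + 0..} \<partial>p1)
      = emeasure p2 {r + 0..} * (\<integral>\<^sup>+r. emeasure p2 {r + d..} \<partial>p1)"
    by (rule AE_proportional_densities[OF q1.sigma_finite_measure_axioms meas meas, of _ "emeasure p3"])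
       (auto simp: tail_identity d sets1 simp del: add_0_right)
  then show ?thesis
  proof eventually_elim
    case (elim r)
    then show ?case
      using cross_tail_eq[OF q2.prob_space_axioms q1.prob_space_axioms]
        cross_tail_eq[OF q2.prob_space_axioms q1.prob_space_axioms, of 0, simplified]
      by (simp add: q2.emeasure_eq_measure tail_def ennreal_mult''[symmetric] ennreal_inj
          del: ennreal_mult'')
  qed
qed

lemma tail_shift_at_atom:
  assumes "measure p1 {y} > 0" "d \<ge> 0"
  shows "tail p2 (y + d) * cross_tail p2 p1 0 = tail p2 y * cross_tail p2 p1 d"
  using assms by (intro AE_atom[OF tail_shift_AE]) (auto simp: sets1 q1.emeasure_eq_measure)

end

context R_invariant_nondeg
begin

lemma tail_tmin: "tail p1 tmin = 1"
proof -
  have "{..<tmin} \<inter> S1 = {}" using tmin_le_S1 by force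
  then have "measure p1 {..<tmin} = 0"
    using null_outside_msupp[OF h1, of "{..<tmin}"] by (simp add: q1.emeasure_eq_measure)
  then show ?thesis using tail_compl[OF h1, of tmin] by simp
qed

lemma tail_pos_all: "tail p1 x > 0"
  using S1_unbounded[of "x + 1"] tail_pos[OF h1] by force

end

context R_invariant_nondeg
begin

lemma tail3_tmin: "tail p3 tmin = 1"
  using tail_product[of tmin] tail_tmin swap.tail_tmin by simp

text \<open>Since \<open>tmin\<close> lies in \<open>S1\<close> and all tails are positive, \<open>P(Y \<ge> X)\<close> is positive.\<close>
lemma cross_tail_pos: "cross_tail p2 p1 0 > 0"
proof -
  let ?x = "tmin + 1"
  have "ennreal (tail p2 ?x * measure p1 {..<?x}) = (\<integral>\<^sup>+r. emeasure p2 {?x..} * indicator {..<?x} r \<partial>p1)"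
    by (simp add: nn_integral_cmult_indicator sets1 tail_def q1.emeasure_eq_measure
        q2.emeasure_eq_measure ennreal_mult'')
  also have "\<dots> \<le> (\<integral>\<^sup>+r. emeasure p2 {r + 0..} \<partial>p1)"
    by (intro nn_integral_mono) (auto simp: indicator_def sets2 intro!: emeasure_mono)
  also have "\<dots> = ennreal (cross_tail p2 p1 0)"
    by (rule cross_tail_eq[OF q2.prob_space_axioms q1.prob_space_axioms])
  finally have "tail p2 ?x * measure p1 {..<?x} \<le> cross_tail p2 p1 0"
    using ennreal_le_iff[of "cross_tail p2 p1 0"] by (simp add: cross_tail_def)
  moreover have "0 < tail p2 ?x * measure p1 {..<?x}"
    using swap.tail_pos_all measure_lessThan_pos[OF h1 tmin_in_S1, of ?x] by simp
  ultimately show ?thesis by linarith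
qed

text \<open>The key identity for \<open>d = 0\<close> and \<open>C = {tmin}\<close> relates the atoms at \<open>tmin\<close>.\<close>
lemma atom_tmin: "measure p1 {tmin} = measure p3 {tmin} * cross_tail p2 p1 0"
proof -
  have "ennreal (measure p1 {tmin}) = (\<integral>\<^sup>+r. emeasure p2 {tmin..} * indicator {tmin} r \<partial>p1)"
    using swap.tail_tmin
    by (simp add: nn_integral_cmult_indicator sets1 tail_def q1.emeasure_eq_measure q2.emeasure_eq_measure)
  also have "\<dots> = (\<integral>\<^sup>+r. emeasure p2 {r + 0..} * indicator {tmin} r \<partial>p1)"
    by (intro nn_integral_cong) (auto simp: indicator_def)
  also have "\<dots> = emeasure p3 {tmin} * ennreal (cross_tail p2 p1 0)"
    using tail_identity[of 0 "{tmin}"] cross_tail_eq[OF q2.prob_space_axioms q1.prob_space_axioms, of 0]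
    by simp
  finally show ?thesis
    by (simp add: q3.emeasure_eq_measure ennreal_mult''[symmetric] ennreal_inj del: ennreal_mult'')
qed

lemma tail_mult_at_atoms:
  assumes y: "measure p1 {y} > 0" and t: "measure p1 {tmin} > 0" and d: "d \<ge> 0"
  shows "tail p2 (y + d) = tail p2 y * tail p2 (tmin + d)"
proof -
  have "cross_tail p2 p1 d = cross_tail p2 p1 0 * tail p2 (tmin + d)"
    using tail_shift_at_atom[OF t d] swap.tail_tmin by (simp add: mult.commute)
  then have "cross_tail p2 p1 0 * tail p2 (y + d) = cross_tail p2 p1 0 * (tail p2 y * tail p2 (tmin + d))"
    using tail_shift_at_atom[OF y d] by (simp add: ac_simps)
  then show ?thesis using cross_tail_pos by simp
qed

end

section \<open>The lattice case\<close>

context R_invariant_nondeg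
begin

text \<open>If \<open>S3 = tmin + c\<int>\<^sub>+\<close>, every support point is an atom of \<open>\<pi>\<^sub>2\<close>, so the tail of \<open>\<pi>\<^sub>1\<close>
  along the lattice is a multiplicative sequence, i.e. geometric.\<close>
lemma lattice_tail:
  assumes c: "c > 0" "(\<lambda>x. x - tmin) ` S3 = range (\<lambda>n::nat. c * real n)"
  shows "\<exists>l. 0 < l \<and> l < 1 \<and> (\<forall>n::nat. tail p1 (tmin + c * real n) = l ^ n)"
proof -
  define pt where "pt n = tmin + c * real n" for n :: nat
  have "S3 = (\<lambda>u. tmin + u) ` ((\<lambda>x. x - tmin) ` S3)" by (simp add: image_image)
  then have S3: "S3 = range pt" by (simp add: c(2) image_image pt_def)
  have atom: "measure p2 {pt n} > 0" for n
  proof (rule msupp_isolated_atom[OF h2 _ half_gt_zero[OF c(1)]])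
    show "pt n \<in> S2" using S3 swap.S1_eq_S3 by auto
    show "ball (pt n) (c / 2) \<inter> S2 \<subseteq> {pt n}"
    proof
      fix y assume y: "y \<in> ball (pt n) (c / 2) \<inter> S2"
      then obtain m where m: "y = pt m" using S3 swap.S1_eq_S3 by auto
      have "pt m - pt n = c * (real m - real n)" by (simp add: pt_def algebra_simps)
      then have "c * \<bar>real m - real n\<bar> = dist (pt m) (pt n)"
        using c(1) by (simp add: dist_real_def abs_mult)
      also have "\<dots> < c * (1 / 2)" using y m by (simp add: dist_commute)
      finally have close: "\<bar>real m - real n\<bar> < 1 / 2" using c(1) by simp
      have "m = n"
      proof (rule ccontr)
        assume "m \<noteq> n"
        then have "Suc m \<le> n \<or> Suc n \<le> m" by linarith
        then have "1 + real m \<le> real n \<or> 1 + real n \<le> real m" by (metis of_nat_Suc of_nat_le_iff)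
        then show False using close by (auto simp: abs_less_iff)
      qed
      then show "y \<in> {pt n}" using m by simp
    qed
  qed
  have pt0: "pt 0 = tmin" by (simp add: pt_def)
  have mult: "tail p1 (pt (n + m)) = tail p1 (pt n) * tail p1 (pt m)" for n m
    using swap.tail_mult_at_atoms[OF atom atom[of 0, unfolded pt0], of "c * real m" n] c(1)
    by (simp add: pt_def algebra_simps)
  have "tail p1 (pt n) = tail p1 (pt 1) ^ n" for n
    by (rule mult_seq_power[of "\<lambda>n. tail p1 (pt n)"]) (use mult in \<open>auto simp: pt0 tail_tmin\<close>)
  moreover have "tail p1 (pt 1) < 1"
    using tail_compl[OF h1] measure_lessThan_pos[OF h1 tmin_in_S1, of "pt 1"] c(1) by (simp add: pt_def)
  ultimately show ?thesis using tail_pos_all by (auto simp: pt_def)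
qed

section \<open>The continuous case\<close>

lemma shift_law_p1:
  assumes S3: "S3 = {tmin..}"
  shows "tail_shift_law p1 p2 tmin (\<lambda>d. cross_tail p1 p2 d / cross_tail p1 p2 0)"
proof
  show "prob_on_nonneg p1" "prob_on_nonneg p2" by (rule h1, rule h2)
  show "msupp p2 = {tmin..}" using swap.S1_eq_S3 S3 by simp
  show "cross_tail p1 p2 d / cross_tail p1 p2 0 \<ge> 0" for d by (simp add: cross_tail_def)
  show "tail p1 x > 0" for x by (rule tail_pos_all)
  fix d :: real assume d: "d \<ge> 0"
  from swap.tail_shift_AE[OF d]
  show "AE s in p2. tail p1 (s + d) = cross_tail p1 p2 d / cross_tail p1 p2 0 * tail p1 s"
    by eventually_elim (use swap.cross_tail_pos in \<open>simp add: field_simps\<close>)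
qed

text \<open>An atom of \<open>\<pi>\<^sub>1\<close> at \<open>tmin\<close> would force one of \<open>\<pi>\<^sub>3\<close> and then of \<open>\<pi>\<^sub>2\<close>; the shift
  law at that atom contradicts the shift law for the strict tail.\<close>
lemma no_atom_tmin:
  assumes S3: "S3 = {tmin..}"
  shows "measure p1 {tmin} = 0"
proof (rule ccontr)
  define kap where "kap d = cross_tail p1 p2 d / cross_tail p1 p2 0" for d
  interpret law: tail_shift_law p1 p2 tmin kap using shift_law_p1[OF S3] by (simp add: kap_def[abs_def])
  define j1 j2 j3 where "j1 = measure p1 {tmin}" and "j2 = measure p2 {tmin}" and "j3 = measure p3 {tmin}"
  assume "measure p1 {tmin} \<noteq> 0"
  then have j1: "j1 > 0" by (simp add: j1_def zero_less_measure_iff)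
  have "tail_gt p1 tmin = 1 - j1" "tail_gt p2 tmin = 1 - j2" "tail_gt p3 tmin = 1 - j3"
    using tail_split[OF h1, of tmin] tail_split[OF h2, of tmin] tail_split[OF h3, of tmin]
      tail_tmin swap.tail_tmin tail3_tmin by (simp_all add: j1_def j2_def j3_def)
  then have "1 - j3 = (1 - j1) * (1 - j2)" using tail_gt_product[of tmin] by simp
  then have "j3 = j1 + j2 * (1 - j1)" by algebra
  moreover have "0 \<le> j2 * (1 - j1)"
    using q1.measure_le_1[of "{tmin}"] measure_nonneg[of p2 "{tmin}"] by (simp add: j1_def j2_def)
  ultimately have "j3 \<ge> j1" by linarith
  then have "j2 > 0" using j1 swap.atom_tmin swap.cross_tail_pos by (simp add: j2_def j3_def)
  then have "tail p1 (tmin + 1) = kap 1"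
    using swap.tail_shift_at_atom[of tmin 1] tail_tmin swap.cross_tail_pos by (simp add: j2_def kap_def field_simps)
  moreover have "tail p1 (tmin + 1) = tail_gt p1 (tmin + 1)"
    using law.no_atom_above[of "tmin + 1"] tail_split[OF h1] by simp
  moreover have "tail_gt p1 (tmin + 1) = kap 1 * (1 - j1)"
    using law.law_tail_gt[of tmin 1] tail_split[OF h1, of tmin] tail_tmin by (simp add: j1_def)
  ultimately have "tail p1 (tmin + 1) = 0" using j1 by (simp add: algebra_simps)
  then show False using tail_pos_all[of "tmin + 1"] by simp
qed

text \<open>Without an atom at \<open>tmin\<close>, \<open>t \<mapsto> tail p1 (tmin + t)\<close> is multiplicative, hence exponential.\<close>
lemma exp_tail:
  assumes S3: "S3 = {tmin..}"
  shows "\<exists>\<alpha>>0. \<forall>t\<ge>0. tail p1 (tmin + t) = exp (- \<alpha> * t)"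
proof (rule multiplicative_exp)
  define kap where "kap d = cross_tail p1 p2 d / cross_tail p1 p2 0" for d
  interpret law: tail_shift_law p1 p2 tmin kap using shift_law_p1[OF S3] by (simp add: kap_def[abs_def])
  have kap: "tail p1 (tmin + d) = kap d" if d: "d \<ge> 0" for d
  proof (cases "d = 0")
    case True then show ?thesis using tail_tmin swap.cross_tail_pos by (simp add: kap_def)
  next
    case False
    then have "tail p1 (tmin + d) = tail_gt p1 (tmin + d)"
      using law.no_atom_above[of "tmin + d"] tail_split[OF h1] d by simp
    also have "\<dots> = kap d"
      using law.law_tail_gt[of tmin d] d tail_split[OF h1, of tmin] tail_tmin no_atom_tmin[OF S3] by simp
    finally show ?thesis .
  qed
  show "tail p1 (tmin + u) > 0" for u by (rule tail_pos_all)
  show "tail p1 (tmin + (u + v)) = tail p1 (tmin + u) * tail p1 (tmin + v)" if "u \<ge> 0" "v \<ge> 0" for u v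
    using law.law_above[of "tmin + u" v] kap[of v] that tail_tmin
    by (cases "u = 0") (simp_all add: add.assoc mult.commute)
  show "tail p1 (tmin + v) \<le> tail p1 (tmin + u)" if "0 \<le> u" "u \<le> v" for u v
    using tail_mono[OF h1] that by simp
  show "tail p1 (tmin + 1) < 1"
    using tail_compl[OF h1] measure_lessThan_pos[OF h1 tmin_in_S1, of "tmin + 1"] by simp
qed

end

context R_invariant_nondeg
begin

lemma lattice_case:
  assumes c: "c > 0" "(\<lambda>x. x - tmin) ` S3 = range (\<lambda>n::nat. c * real n)"
  shows "\<exists>l1 l2. 0 < l1 \<and> l1 < 1 \<and> 0 < l2 \<and> l2 < 1 \<and>
    (\<forall>n::nat. tail p1 (tmin + c * real n) = l1 ^ n \<and> tail p2 (tmin + c * real n) = l2 ^ n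
      \<and> tail p3 (tmin + c * real n) = (l1 * l2) ^ n)"
proof -
  obtain l1 where "0 < l1" "l1 < 1" "\<forall>n::nat. tail p1 (tmin + c * real n) = l1 ^ n"
    using lattice_tail[OF c] by blast
  moreover obtain l2 where "0 < l2" "l2 < 1" "\<forall>n::nat. tail p2 (tmin + c * real n) = l2 ^ n"
    using swap.lattice_tail[OF c] by blast
  ultimately show ?thesis using tail_product by (auto simp: power_mult_distrib)
qed

lemma exp_case:
  assumes T: "(\<lambda>x. x - tmin) ` S3 = {0..}"
  shows "\<exists>\<alpha>1 \<alpha>2. \<alpha>1 > 0 \<and> \<alpha>2 > 0 \<and>
    (\<forall>t\<ge>0. tail p1 (tmin + t) = exp (- \<alpha>1 * t) \<and> tail p2 (tmin + t) = exp (- \<alpha>2 * t)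
      \<and> tail p3 (tmin + t) = exp (- (\<alpha>1 + \<alpha>2) * t))"
proof -
  have "y \<in> S3 \<longleftrightarrow> y - tmin \<in> (\<lambda>x. x - tmin) ` S3" for y by (auto intro: image_eqI[of _ _ y])
  then have S3: "S3 = {tmin..}" using T by auto
  obtain \<alpha>1 where a1: "\<alpha>1 > 0" "\<And>t. t \<ge> 0 \<Longrightarrow> tail p1 (tmin + t) = exp (- \<alpha>1 * t)"
    using exp_tail[OF S3] by blast
  obtain \<alpha>2 where a2: "\<alpha>2 > 0" "\<And>t. t \<ge> 0 \<Longrightarrow> tail p2 (tmin + t) = exp (- \<alpha>2 * t)"
    using swap.exp_tail[OF S3] by blast
  have "tail p3 (tmin + t) = exp (- (\<alpha>1 + \<alpha>2) * t)" if "t \<ge> 0" for t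
    using tail_product a1(2)[OF that] a2(2)[OF that] by (simp add: exp_add[symmetric] algebra_simps)
  then show ?thesis using a1 a2 by blast
qed

end

text \<open>The three possible shapes of \<open>U3\<close> are different, so at most one case applies.\<close>
lemma lattice_shapes_distinct:
  fixes c :: real
  assumes c: "c > 0"
  shows "range (\<lambda>n::nat. c * real n) \<noteq> {0}" "range (\<lambda>n::nat. c * real n) \<noteq> {0..}"
proof -
  show "range (\<lambda>n::nat. c * real n) \<noteq> {0}" using c by (metis (mono_tags) rangeI singletonD mult_cancel_left1
      of_nat_1 zero_neq_one mult_eq_0_iff less_irrefl)
  show "range (\<lambda>n::nat. c * real n) \<noteq> {0..}"
  proof
    assume "range (\<lambda>n::nat. c * real n) = {0..}"
    then obtain n :: nat where "c / 2 = c * real n" using c by (metis atLeast_iff half_gt_zero less_eq_real_def rangeE)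
    then have "real n = 1 / 2" using c by (simp add: field_simps)
    then show False by (cases n) auto
  qed
qed

theorem mainTheorem1:
  fixes \<pi>1 \<pi>2 \<pi>3 :: "real measure"
  assumes h1: "prob_on_nonneg \<pi>1" and h2: "prob_on_nonneg \<pi>2" and h3: "prob_on_nonneg \<pi>3"
  assumes hR: "distr (\<pi>1 \<Otimes>\<^sub>M (\<pi>2 \<Otimes>\<^sub>M \<pi>3)) (\<pi>1 \<Otimes>\<^sub>M (\<pi>2 \<Otimes>\<^sub>M \<pi>3)) Rmap
               = \<pi>1 \<Otimes>\<^sub>M (\<pi>2 \<Otimes>\<^sub>M \<pi>3)"
  defines "t0 \<equiv> Inf (msupp \<pi>3)"
  defines "U1 \<equiv> (\<lambda>x. x - t0) ` msupp \<pi>1"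
      and "U2 \<equiv> (\<lambda>x. x - t0) ` msupp \<pi>2"
      and "U3 \<equiv> (\<lambda>x. x - t0) ` msupp \<pi>3"
  defines "F1 \<equiv> (\<lambda>t. measure \<pi>1 {t0 + t..})"
      and "F2 \<equiv> (\<lambda>t. measure \<pi>2 {t0 + t..})"
      and "F3 \<equiv> (\<lambda>t. measure \<pi>3 {t0 + t..})"
  defines "C1 \<equiv> (U3 = {0})"
  defines "C2 \<equiv> (U1 = {0..} \<and> U2 = {0..} \<and> U3 = {0..} \<and>
              (\<exists>\<alpha>1 \<alpha>2. \<alpha>1 > 0 \<and> \<alpha>2 > 0 \<and>
                 (\<forall>t\<ge>0. F1 t = exp (- \<alpha>1 * t) \<and> F2 t = exp (- \<alpha>2 * t)
                          \<and> F3 t = exp (- (\<alpha>1 + \<alpha>2) * t))))"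
  defines "C3 \<equiv> (\<exists>c>0. U1 = range (\<lambda>n::nat. c * real n) \<and> U2 = range (\<lambda>n::nat. c * real n)
              \<and> U3 = range (\<lambda>n::nat. c * real n) \<and>
              (\<exists>l1 l2. 0 < l1 \<and> l1 < 1 \<and> 0 < l2 \<and> l2 < 1 \<and>
                 (\<forall>n::nat. F1 (c * real n) = l1 ^ n \<and> F2 (c * real n) = l2 ^ n
                          \<and> F3 (c * real n) = (l1 * l2) ^ n)))"
  shows "(C1 \<and> \<not> C2 \<and> \<not> C3) \<or> (\<not> C1 \<and> C2 \<and> \<not> C3) \<or> (\<not> C1 \<and> \<not> C2 \<and> C3)"
proof -
  interpret R_invariant \<pi>1 \<pi>2 \<pi>3 using h1 h2 h3 hR by unfold_locales
  have t0: "t0 = tmin" by (simp add: t0_def)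
  have half_line: "{0::real} \<noteq> {0..}" by (metis atLeast_iff singletonD zero_neq_one zero_le_one)
  show ?thesis
  proof (cases "msupp \<pi>3 = {tmin}")
    case True
    have U3: "U3 = {0}" unfolding U3_def by (subst True) (simp add: t0)
    moreover have "\<not> C2" using U3 half_line unfolding C2_def by auto
    moreover have "\<not> C3" using U3 lattice_shapes_distinct(1) unfolding C3_def by metis
    ultimately show ?thesis unfolding C1_def by blast
  next
    case False
    interpret R_invariant_nondeg \<pi>1 \<pi>2 \<pi>3 using False by unfold_locales
    have U: "U1 = U3" "U2 = U3" "U3 = (\<lambda>x. x - tmin) ` msupp \<pi>3"
      by (simp_all add: U1_def U2_def U3_def t0 S1_eq_S3 swap.S1_eq_S3)
    have F: "F1 = (\<lambda>t. tail \<pi>1 (tmin + t))" "F2 = (\<lambda>t. tail \<pi>2 (tmin + t))"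
      "F3 = (\<lambda>t. tail \<pi>3 (tmin + t))" by (simp_all add: F1_def F2_def F3_def tail_def t0)
    from support_cases show ?thesis
    proof
      assume T: "(\<lambda>x. x - tmin) ` msupp \<pi>3 = {0..}"
      then have "C2" using exp_case[OF T] unfolding C2_def U F by auto
      moreover have "\<not> C1" using T half_line unfolding C1_def U by simp
      moreover have "\<not> C3" using T lattice_shapes_distinct(2) unfolding C3_def U by metis
      ultimately show ?thesis by blast
    next
      assume "\<exists>c>0. (\<lambda>x. x - tmin) ` msupp \<pi>3 = range (\<lambda>n::nat. c * real n)"
      then obtain c where c: "c > 0" "(\<lambda>x. x - tmin) ` msupp \<pi>3 = range (\<lambda>n::nat. c * real n)" by blast
      then have "C3" using lattice_case[OF c] unfolding C3_def U F by blast
      moreover have "\<not> C1" using c lattice_shapes_distinct(1) unfolding C1_def U by simp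
      moreover have "\<not> C2" using c lattice_shapes_distinct(2) unfolding C2_def U by simp
      ultimately show ?thesis by blast
    qed
  qed
qed

end
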